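(* Let $d\ge 2$. There are a constant $C>0$ and $n_0(d)$ depending only on $d$ such that for all $n\ge n_0(d)$: if $\mathcal{F}$, $B_i$ are as in the context, $J\subseteq[n]$ with $|J|\le n/4$, and $K\ge 0$ is a real number with $|E(\mathcal{G}_J)|\ge\binom{n-|J|}{d}-Kn$, then $|\mathcal{T}_J^1|\le CK$.
   Context: Let $\mathcal{F}=\{F_1,\dots,F_m\}\subseteq\binom{[n]}{d+1}$ consist of distinct sets and have VC-dimension at most $d$ (no $(d+1)$-set $S$ is shattered, i.e. no $S$ such that every $A\subseteq S$ equals $F\cap S$ for some $F\in\mathcal{F}$). For $i\in[m]$, call $B\subsetneq F_i$ admissible for $F_i$ if $F\cap F_i\neq B$ for every $F\in\mathcal{F}$. For each $i$, $B_i$ is a fixed admissible set for $F_i$ of maximum cardinality among all admissible sets. For $J\subseteq[n]$, $\mathcal{G}_J$ is the $d$-uniform hypergraph on vertex set $[n]\setminus J$ with edge set $E(\mathcal{G}_J):=\{F_k\setminus J: k\in[m],\ |F_k\cap J|=1\}$. $\mathcal{T}_J^1$ is the set of $F_k\in\mathcal{F}$ with $F_k\subseteq[n]\setminus J$, $B_k\subseteq[n]\setminus J$ and $|B_k|=d-1$. *)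

theory Defs
  imports Complex_Main
begin

text \<open>The family is indexed as F 0, ..., F (m-1); the ground set [n] is {1..n}.\<close>

definition shattered :: "nat set set \<Rightarrow> nat set \<Rightarrow> bool" where
  "shattered \<F> S \<longleftrightarrow> (\<forall>A. A \<subseteq> S \<longrightarrow> (\<exists>F\<in>\<F>. F \<inter> S = A))"

definition vc_dim_le :: "nat set set \<Rightarrow> nat \<Rightarrow> nat \<Rightarrow> bool" where
  "vc_dim_le \<F> n d \<longleftrightarrow>
     (\<forall>S. S \<subseteq> {1..n} \<longrightarrow> card S = d + 1 \<longrightarrow> \<not> shattered \<F> S)"

definition admissible :: "(nat \<Rightarrow> nat set) \<Rightarrow> nat \<Rightarrow> nat \<Rightarrow> nat set \<Rightarrow> bool" where
  "admissible F m i B \<longleftrightarrow> B \<subset> F i \<and> (\<forall>k<m. F k \<inter> F i \<noteq> B)"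

definition max_admissible :: "(nat \<Rightarrow> nat set) \<Rightarrow> nat \<Rightarrow> nat \<Rightarrow> nat set \<Rightarrow> bool" where
  "max_admissible F m i B \<longleftrightarrow> admissible F m i B \<and>
     (\<forall>B'. admissible F m i B' \<longrightarrow> card B' \<le> card B)"

definition edges_G :: "(nat \<Rightarrow> nat set) \<Rightarrow> nat \<Rightarrow> nat set \<Rightarrow> nat set set" where
  "edges_G F m J = {F k - J | k. k < m \<and> card (F k \<inter> J) = 1}"

definition T1 :: "(nat \<Rightarrow> nat set) \<Rightarrow> (nat \<Rightarrow> nat set) \<Rightarrow> nat \<Rightarrow> nat \<Rightarrow> nat \<Rightarrow> nat set \<Rightarrow> nat set set" where
  "T1 F B m n d J = {F k | k. k < m \<and> F k \<subseteq> {1..n} - J \<and> B k \<subseteq> {1..n} - J \<and> card (B k) = d - 1}"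

end

theory Submission
  imports Defs
begin

text \<open>
  Let \<open>I\<close> index the sets counted in \<open>T\<^sup>1\<^sub>J\<close>. Maximality of an admissible \<open>B\<^sub>k\<close> of size
  \<open>d - 1\<close> forces, for each of the two points \<open>a\<close> of \<open>F\<^sub>k - B\<^sub>k\<close>, a set
  \<open>F\<^sub>j = B\<^sub>k \<union> {a, w}\<close> with \<open>w \<notin> F\<^sub>k\<close>; from this at most three members of \<open>\<F>\<close> share
  the same maximal admissible set \<open>B\<^sub>k\<close>. On the other hand, for \<open>k \<in> I\<close> no set
  \<open>B\<^sub>k \<union> {z}\<close> with \<open>z \<notin> J \<union> F\<^sub>k\<close> is an edge of \<open>\<G>\<^sub>J\<close>, so each distinct \<open>B\<^sub>k\<close> lies in
  at least \<open>n/2\<close> non-edges, while a non-edge contains only \<open>d\<close> sets of size \<open>d - 1\<close>.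
  Since there are at most \<open>K n\<close> non-edges, double counting gives at most \<open>2 d K\<close>
  distinct sets \<open>B\<^sub>k\<close>, hence \<open>|T\<^sup>1\<^sub>J| \<le> 6 d K\<close>.
\<close>

lemma double_counting_le:
  assumes "finite A" "finite B"
    and "\<And>a. a \<in> A \<Longrightarrow> L \<le> card {b\<in>B. R a b}"
    and "\<And>b. b \<in> B \<Longrightarrow> card {a\<in>A. R a b} \<le> D"
  shows "card A * L \<le> D * card B"
proof -
  have "card A * L = (\<Sum>a\<in>A. L)" by simp
  also have "\<dots> \<le> (\<Sum>a\<in>A. card {b\<in>B. R a b})" using assms(3) by (rule sum_mono)
  also have "\<dots> = (\<Sum>a\<in>A. \<Sum>b\<in>B. if R a b then 1 else 0)"
    using assms(2) by (simp add: sum.inter_filter[symmetric])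
  also have "\<dots> = (\<Sum>b\<in>B. \<Sum>a\<in>A. if R a b then 1 else 0)" by (rule sum.swap)
  also have "\<dots> = (\<Sum>b\<in>B. card {a\<in>A. R a b})"
    using assms(1) by (simp add: sum.inter_filter[symmetric])
  also have "\<dots> \<le> (\<Sum>b\<in>B. D)" using assms(4) by (rule sum_mono)
  finally show ?thesis by (simp add: mult.commute)
qed

lemma card_image_le_fibres:
  assumes "finite I" "\<And>k. k \<in> I \<Longrightarrow> card (f ` {l\<in>I. g l = g k}) \<le> c"
  shows "card (f ` I) \<le> c * card (g ` I)"
proof -
  have "f ` I = (\<Union>y\<in>g ` I. f ` {l\<in>I. g l = y})" by auto
  then have "card (f ` I) \<le> (\<Sum>y\<in>g ` I. card (f ` {l\<in>I. g l = y}))"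
    using card_UN_le[of "g ` I"] \<open>finite I\<close> by simp
  also have "\<dots> \<le> (\<Sum>y\<in>g ` I. c)"
    using assms(2) by (intro sum_mono) auto
  finally show ?thesis by (simp add: mult.commute)
qed

lemma card_subsets_card_pred:
  assumes "finite e" "card e = d" "d \<ge> 1"
  shows "card {b. b \<subseteq> e \<and> card b = d - 1} = d"
  using n_subsets[OF assms(1), of "d - 1"] assms binomial_symmetric[of "d - 1" d] by simp

lemma card_diff_eq_2:
  assumes "finite X" "card X = d + 1" "Y \<subseteq> X" "card Y = d - 1" "d \<ge> 2"
  obtains a b where "a \<noteq> b" "X = Y \<union> {a, b}" "a \<notin> Y" "b \<notin> Y"
proof -
  have "card (X - Y) = 2"
    using assms card_Diff_subset[OF finite_subset[OF assms(3,1)] assms(3)] by simp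
  then obtain a b where "a \<noteq> b" "X - Y = {a, b}" by (metis card_2_iff)
  then show thesis using that assms(3) by blast
qed

lemma max_admissible_psubset:
  "max_admissible F m k B \<Longrightarrow> B \<subset> F k"
  unfolding max_admissible_def admissible_def by simp

lemma max_admissible_trace_ne:
  "max_admissible F m k B \<Longrightarrow> j < m \<Longrightarrow> F j \<inter> F k \<noteq> B"
  unfolding max_admissible_def admissible_def by simp

text \<open>The set \<open>B \<union> {a}\<close> is too large to be admissible, so it is a trace \<open>F\<^sub>j \<inter> F\<^sub>k\<close>.\<close>

lemma max_admissible_extension_trace:
  assumes Fs: "\<forall>i<m. finite (F i) \<and> card (F i) = d + 1"
    and max: "max_admissible F m k B" and "k < m"
    and cB: "card B = d - 1" and "d \<ge> 2"
    and a: "a \<in> F k" "a \<notin> B"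
  obtains j w where "j < m" "w \<notin> F k" "F j = B \<union> {a, w}"
proof -
  have Bk: "B \<subset> F k" using max by (rule max_admissible_psubset)
  have finB: "finite B" using Bk Fs \<open>k < m\<close> finite_subset by blast
  have cBa: "card (B \<union> {a}) = d" using finB a cB \<open>d \<ge> 2\<close> by simp
  have "B \<union> {a} \<subset> F k"
    using Bk a Fs \<open>k < m\<close> cBa
    by (metis Un_insert_right insert_subsetI psubsetE psubsetI sup_bot.right_neutral
        n_not_Suc_n Suc_eq_plus1)
  moreover have "\<not> admissible F m k (B \<union> {a})"
    using max cBa cB \<open>d \<ge> 2\<close> unfolding max_admissible_def by fastforce
  ultimately obtain j where j: "j < m" "F j \<inter> F k = B \<union> {a}"
    unfolding admissible_def by auto
  have "B \<union> {a} \<subseteq> F j" using j by auto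
  moreover have "finite (F j)" "card (F j) = d + 1" using Fs j(1) by auto
  ultimately have "card (F j - (B \<union> {a})) = 1"
    using cBa card_Diff_subset[OF finite_subset] by (metis add_diff_cancel_left' add.commute)
  then obtain w where w: "F j - (B \<union> {a}) = {w}" by (metis card_1_singletonE)
  show thesis
  proof
    show "j < m" by fact
    show "w \<notin> F k" using w j by auto
    show "F j = B \<union> {a, w}" using w j by auto
  qed
qed

lemma card_max_admissible_fibre_le_3:
  assumes Fs: "\<forall>i<m. finite (F i) \<and> card (F i) = d + 1"
    and adm: "\<forall>i<m. max_admissible F m i (B i)"
    and "k < m" and cB: "card (B k) = d - 1" and "d \<ge> 2"
  shows "card (F ` {l. l < m \<and> B l = B k}) \<le> 3"
proof -
  have maxk: "max_admissible F m k (B k)" using adm \<open>k < m\<close> by blast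
  have Bk: "B k \<subset> F k" using maxk by (rule max_admissible_psubset)
  obtain a b where ab: "a \<noteq> b" "F k = B k \<union> {a, b}" "a \<notin> B k" "b \<notin> B k"
    using card_diff_eq_2[of "F k" d "B k"] Fs Bk cB \<open>k < m\<close> \<open>d \<ge> 2\<close> by blast
  obtain j w where w: "j < m" "w \<notin> F k" "F j = B k \<union> {a, w}"
    using max_admissible_extension_trace[OF Fs maxk \<open>k < m\<close> cB \<open>d \<ge> 2\<close>, of a] ab by auto
  obtain j' w' where w': "j' < m" "w' \<notin> F k" "F j' = B k \<union> {b, w'}"
    using max_admissible_extension_trace[OF Fs maxk \<open>k < m\<close> cB \<open>d \<ge> 2\<close>, of b] ab by auto
  have "F ` {l. l < m \<and> B l = B k} \<subseteq> {B k \<union> {a, b}, B k \<union> {a, w'}, B k \<union> {b, w}}"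
  proof
    fix X assume "X \<in> F ` {l. l < m \<and> B l = B k}"
    then obtain l where l: "l < m" "B l = B k" "X = F l" by auto
    have maxl: "max_admissible F m l (B k)" using adm l by auto
    obtain p q where pq: "p \<noteq> q" "F l = B k \<union> {p, q}" "p \<notin> B k" "q \<notin> B k"
      using card_diff_eq_2[of "F l" d "B k"] Fs l cB max_admissible_psubset[OF maxl] \<open>d \<ge> 2\<close>
      by blast
    \<comment> \<open>\<open>F\<^sub>l\<close> must meet each of \<open>F\<^sub>k\<close>, \<open>F\<^sub>j\<close>, \<open>F\<^sub>j'\<close> outside \<open>B\<^sub>k\<close>, or \<open>B\<^sub>k\<close> would be a trace.\<close>
    have meets: "{p, q} \<inter> Q \<noteq> {}" if "i < m" "F i = B k \<union> Q" "Q \<inter> B k = {}" for i Q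
      using max_admissible_trace_ne[OF maxl \<open>i < m\<close>] that pq by blast
    have "{p, q} \<inter> {a, b} \<noteq> {}" using meets[of k "{a, b}"] ab \<open>k < m\<close> by auto
    moreover have "{p, q} \<inter> {a, w} \<noteq> {}" using meets[of j "{a, w}"] w ab by auto
    moreover have "{p, q} \<inter> {b, w'} \<noteq> {}" using meets[of j' "{b, w'}"] w' ab by auto
    moreover have "a \<noteq> w'" "b \<noteq> w" using w w' ab by auto
    ultimately have "{p, q} = {a, b} \<or> {p, q} = {a, w'} \<or> {p, q} = {b, w}"
      using ab(1) pq(1) by auto
    then show "X \<in> {B k \<union> {a, b}, B k \<union> {a, w'}, B k \<union> {b, w}}" using pq l by auto
  qed
  moreover have "card {B k \<union> {a, b}, B k \<union> {a, w'}, B k \<union> {b, w}} \<le> 3"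
    by (simp add: card_insert_if)
  ultimately show ?thesis
    by (meson card_mono finite.emptyI finite.insertI le_trans)
qed

lemma max_admissible_insert_not_edge:
  assumes "max_admissible F m k B" "k < m" "F k \<inter> J = {}" "z \<notin> J" "z \<notin> F k"
  shows "B \<union> {z} \<notin> edges_G F m J"
proof
  assume "B \<union> {z} \<in> edges_G F m J"
  then obtain l where l: "l < m" "F l - J = B \<union> {z}" unfolding edges_G_def by auto
  have "F l \<inter> F k = (F l - J) \<inter> F k" using assms(3) by blast
  also have "\<dots> = B" using l max_admissible_psubset[OF assms(1)] assms(5) by auto
  finally show False using max_admissible_trace_ne[OF assms(1) l(1)] by simp
qed

definition non_edges_G :: "(nat \<Rightarrow> nat set) \<Rightarrow> nat \<Rightarrow> nat \<Rightarrow> nat \<Rightarrow> nat set \<Rightarrow> nat set set" where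
  "non_edges_G F m n d J = {e. e \<subseteq> {1..n} - J \<and> card e = d} - edges_G F m J"

lemma edges_G_subset:
  assumes "\<forall>i<m. F i \<subseteq> {1..n} \<and> card (F i) = d + 1"
  shows "edges_G F m J \<subseteq> {e. e \<subseteq> {1..n} - J \<and> card e = d}"
proof
  fix e assume "e \<in> edges_G F m J"
  then obtain k where k: "k < m" "card (F k \<inter> J) = 1" "e = F k - J"
    unfolding edges_G_def by auto
  have "finite (F k)" using assms k(1) finite_subset by blast
  then have "card e = d" using k assms card_Diff_subset_Int[of "F k" J] by auto
  moreover have "e \<subseteq> {1..n} - J" using k assms by auto
  ultimately show "e \<in> {e. e \<subseteq> {1..n} - J \<and> card e = d}" by simp
qed

lemma card_non_edges_G:
  assumes "\<forall>i<m. F i \<subseteq> {1..n} \<and> card (F i) = d + 1" "J \<subseteq> {1..n}"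
  shows "card (non_edges_G F m n d J) + card (edges_G F m J) = (n - card J) choose d"
proof -
  have "card ({1..n} - J) = n - card J"
    using assms(2) by (simp add: card_Diff_subset finite_subset)
  then have "card {e. e \<subseteq> {1..n} - J \<and> card e = d} = (n - card J) choose d"
    using n_subsets[of "{1..n} - J" d] by simp
  moreover have "finite {e. e \<subseteq> {1..n} - J \<and> card e = d}" by simp
  ultimately show ?thesis
    unfolding non_edges_G_def using edges_G_subset[OF assms(1), of J]
    by (metis (no_types, lifting) card_Diff_subset card_mono finite_subset le_add_diff_inverse2)
qed

lemma card_non_edges_G_containing:
  assumes Fs: "\<forall>i<m. F i \<subseteq> {1..n} \<and> card (F i) = d + 1"
    and adm: "\<forall>i<m. max_admissible F m i (B i)"
    and k: "k < m" "F k \<subseteq> {1..n} - J" "card (B k) = d - 1" and "d \<ge> 2"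
  shows "card ({1..n} - J) - (d + 1) \<le> card {e \<in> non_edges_G F m n d J. B k \<subseteq> e}"
proof -
  let ?V = "{1..n} - J"
  have Bk: "B k \<subset> F k" using adm k(1) max_admissible_psubset by blast
  have finF: "finite (F k)" using k(2) finite_subset by blast
  have finB: "finite (B k)" using Bk finF finite_subset by blast
  have "inj_on (\<lambda>z. B k \<union> {z}) (?V - F k)"
    using Bk by (intro inj_onI) blast
  moreover have "(\<lambda>z. B k \<union> {z}) ` (?V - F k) \<subseteq> {e \<in> non_edges_G F m n d J. B k \<subseteq> e}"
  proof
    fix e assume "e \<in> (\<lambda>z. B k \<union> {z}) ` (?V - F k)"
    then obtain z where z: "z \<in> ?V" "z \<notin> F k" "e = B k \<union> {z}" by auto
    have "z \<notin> B k" using z Bk by auto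
    then have "card (B k \<union> {z}) = d" using finB k \<open>d \<ge> 2\<close> by simp
    moreover have "B k \<union> {z} \<notin> edges_G F m J"
      using max_admissible_insert_not_edge[of F m k "B k" J z] adm k z by auto
    ultimately show "e \<in> {e \<in> non_edges_G F m n d J. B k \<subseteq> e}"
      unfolding non_edges_G_def using z Bk k by auto
  qed
  moreover have "finite {e \<in> non_edges_G F m n d J. B k \<subseteq> e}"
    unfolding non_edges_G_def by simp
  ultimately have "card (?V - F k) \<le> card {e \<in> non_edges_G F m n d J. B k \<subseteq> e}"
    by (metis card_image card_mono)
  moreover have "card ?V - (d + 1) \<le> card (?V - F k)"
    using diff_card_le_card_Diff[OF finF, of ?V] Fs k(1) by simp
  ultimately show ?thesis by linarith
qed

definition T1_index :: "(nat \<Rightarrow> nat set) \<Rightarrow> (nat \<Rightarrow> nat set) \<Rightarrow> nat \<Rightarrow> nat \<Rightarrow> nat \<Rightarrow> nat set \<Rightarrow> nat set" where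
  "T1_index F B m n d J = {k. k < m \<and> F k \<subseteq> {1..n} - J \<and> card (B k) = d - 1}"

lemma T1_eq_image_T1_index:
  assumes "\<forall>i<m. max_admissible F m i (B i)"
  shows "T1 F B m n d J = F ` T1_index F B m n d J"
  using assms max_admissible_psubset unfolding T1_def T1_index_def by fastforce

lemma card_T1_le_card_B_image:
  assumes Fs: "\<forall>i<m. F i \<subseteq> {1..n} \<and> card (F i) = d + 1"
    and adm: "\<forall>i<m. max_admissible F m i (B i)" and "d \<ge> 2"
  shows "card (T1 F B m n d J) \<le> 3 * card (B ` T1_index F B m n d J)"
  unfolding T1_eq_image_T1_index[OF adm]
proof (rule card_image_le_fibres)
  show "finite (T1_index F B m n d J)" unfolding T1_index_def by simp
  fix k assume k: "k \<in> T1_index F B m n d J"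
  have "finite (F i) \<and> card (F i) = d + 1" if "i < m" for i
    using Fs that finite_subset by blast
  then have "card (F ` {l. l < m \<and> B l = B k}) \<le> 3"
    using card_max_admissible_fibre_le_3[OF _ adm _ _ \<open>d \<ge> 2\<close>, of k] k
    unfolding T1_index_def by blast
  moreover have "F ` {l \<in> T1_index F B m n d J. B l = B k} \<subseteq> F ` {l. l < m \<and> B l = B k}"
    unfolding T1_index_def by auto
  moreover have "finite (F ` {l. l < m \<and> B l = B k})" by simp
  ultimately show "card (F ` {l \<in> T1_index F B m n d J. B l = B k}) \<le> 3"
    by (meson card_mono le_trans)
qed

lemma card_B_image_le_non_edges_G:
  assumes Fs: "\<forall>i<m. F i \<subseteq> {1..n} \<and> card (F i) = d + 1"
    and adm: "\<forall>i<m. max_admissible F m i (B i)" and "d \<ge> 2"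
  shows "card (B ` T1_index F B m n d J) * (card ({1..n} - J) - (d + 1))
           \<le> d * card (non_edges_G F m n d J)"
proof (rule double_counting_le[where R = "(\<subseteq>)"])
  show "finite (B ` T1_index F B m n d J)" unfolding T1_index_def by simp
  show "finite (non_edges_G F m n d J)" unfolding non_edges_G_def by simp
  show "card ({1..n} - J) - (d + 1) \<le> card {e \<in> non_edges_G F m n d J. b \<subseteq> e}"
    if "b \<in> B ` T1_index F B m n d J" for b
    using that card_non_edges_G_containing[OF Fs adm _ _ _ \<open>d \<ge> 2\<close>]
    unfolding T1_index_def by blast
  show "card {b \<in> B ` T1_index F B m n d J. b \<subseteq> e} \<le> d"
    if "e \<in> non_edges_G F m n d J" for e
  proof -
    have e: "finite e" "card e = d"
      using that unfolding non_edges_G_def by (auto intro: finite_subset)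
    have "{b \<in> B ` T1_index F B m n d J. b \<subseteq> e} \<subseteq> {b. b \<subseteq> e \<and> card b = d - 1}"
      unfolding T1_index_def by auto
    moreover have "finite {b. b \<subseteq> e \<and> card b = d - 1}" using e(1) by simp
    ultimately show ?thesis
      using card_mono card_subsets_card_pred[OF e] \<open>d \<ge> 2\<close> by fastforce
  qed
qed

lemma card_T1_le:
  assumes "d \<ge> 2" "n \<ge> 4 * d + 4"
    and Fs: "\<forall>i<m. F i \<subseteq> {1..n} \<and> card (F i) = d + 1"
    and adm: "\<forall>i<m. max_admissible F m i (B i)"
    and J: "J \<subseteq> {1..n}" "real (card J) \<le> real n / 4"
    and E: "real (card (edges_G F m J)) \<ge> real ((n - card J) choose d) - K * real n"
  shows "real (card (T1 F B m n d J)) \<le> 6 * real d * K"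
proof -
  let ?b = "real (card (B ` T1_index F B m n d J))"
  have "real (card (non_edges_G F m n d J)) \<le> K * real n"
    using card_non_edges_G[OF Fs J(1)] E
    by (metis add_diff_cancel_right' of_nat_add diff_le_eq add.commute)
  have "card ({1..n} - J) = n - card J"
    using J(1) by (simp add: card_Diff_subset finite_subset)
  then have "real n / 2 \<le> real (card ({1..n} - J) - (d + 1))"
    using J(2) assms(2) by (simp add: of_nat_diff)
  then have "?b * (real n / 2) \<le> ?b * real (card ({1..n} - J) - (d + 1))"
    by (rule mult_left_mono) simp
  also have "\<dots> \<le> real d * real (card (non_edges_G F m n d J))"
    using card_B_image_le_non_edges_G[OF Fs adm \<open>d \<ge> 2\<close>, of J]
    by (metis of_nat_le_iff of_nat_mult)
  also have "\<dots> \<le> real d * (K * real n)"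
    using \<open>real (card (non_edges_G F m n d J)) \<le> K * real n\<close> by (simp add: mult_left_mono)
  finally have "?b \<le> 2 * real d * K"
    using assms(2) by (simp add: field_simps)
  moreover have "real (card (T1 F B m n d J)) \<le> 3 * ?b"
    using card_T1_le_card_B_image[OF Fs adm \<open>d \<ge> 2\<close>, of J]
    by (metis of_nat_le_iff of_nat_mult of_nat_numeral)
  ultimately show ?thesis by linarith
qed

theorem claim3p8:
  fixes d :: nat
  assumes "d \<ge> 2"
  shows "\<exists>C::real. C > 0 \<and> (\<exists>n0::nat. \<forall>n\<ge>n0. \<forall>(F::nat \<Rightarrow> nat set) (B::nat \<Rightarrow> nat set) (m::nat) (J::nat set) (K::real).
     (\<forall>i<m. F i \<subseteq> {1..n} \<and> card (F i) = d + 1) \<longrightarrow>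
     inj_on F {..<m} \<longrightarrow>
     vc_dim_le (F ` {..<m}) n d \<longrightarrow>
     (\<forall>i<m. max_admissible F m i (B i)) \<longrightarrow>
     J \<subseteq> {1..n} \<longrightarrow> real (card J) \<le> real n / 4 \<longrightarrow>
     K \<ge> 0 \<longrightarrow>
     real (card (edges_G F m J)) \<ge> real ((n - card J) choose d) - K * real n \<longrightarrow>
     real (card (T1 F B m n d J)) \<le> C * K)"
proof (intro exI conjI allI impI)
  show "6 * real d > 0" using assms by simp
  fix n F B m J K
  assume "n \<ge> 4 * d + 4" "\<forall>i<m. F i \<subseteq> {1..n} \<and> card (F i) = d + 1"
    "\<forall>i<m. max_admissible F m i (B i)" "J \<subseteq> {1..n}" "real (card J) \<le> real n / 4"
    "real (card (edges_G F m J)) \<ge> real ((n - card J) choose d) - K * real n"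
  then show "real (card (T1 F B m n d J)) \<le> 6 * real d * K"
    using card_T1_le[OF assms] by blast
qed

end
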